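(* Under the standing assumptions below, for every $p>p_k$ there is exactly one $\rho\in(\rho_k,\rho_{\max})$ with $\varPhi_k(p,\rho)=0$.
   Context: Standing assumptions: $\varGamma_k,h_k:(0,\infty)\to\mathbb R$ are twice continuously differentiable and satisfy (C1) $\varGamma_k'\le 0$, $(\rho\varGamma_k(\rho))'\ge 0$, $(\rho\varGamma_k(\rho))''\ge0$; (C2) $\lim_{\rho\to+\infty}\varGamma_k(\rho)=\varGamma_\infty>0$ and $\varGamma_k(\rho)\le\varGamma_\infty+2$ for all $\rho>0$; (C3) $h_k'\ge0$, $h_k''\ge0$. A reference state $\rho_k>0$, $p_k>0$ is given with $e_k:=\dfrac{p_k-h_k(\rho_k)}{\varGamma_k(\rho_k)\rho_k}\ge 0$. The Hugoniot function is $$\varPhi_k(p,\rho):=\varGamma_k(\rho_k)\rho_k\,(p-h_k(\rho))-\varGamma_k(\rho)\rho\,(p_k-h_k(\rho_k))-\tfrac12\varGamma_k(\rho_k)(p+p_k)\varGamma_k(\rho)(\rho-\rho_k).$$ $\rho_{\max}$ denotes the unique $\rho\in(\rho_k,\infty)$ with $(\rho-\rho_k)\varGamma_k(\rho)=2\rho_k$. *)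

theory Defs
  imports "HOL-Analysis.Analysis"
begin

definition hugoniot :: "(real \<Rightarrow> real) \<Rightarrow> (real \<Rightarrow> real) \<Rightarrow> real \<Rightarrow> real \<Rightarrow> real \<Rightarrow> real \<Rightarrow> real" where
  "hugoniot G h rk pk p \<rho> =
     G rk * rk * (p - h \<rho>) - G \<rho> * \<rho> * (pk - h rk)
     - (1/2) * G rk * (p + pk) * G \<rho> * (\<rho> - rk)"

definition rho_max :: "(real \<Rightarrow> real) \<Rightarrow> real \<Rightarrow> real" where
  "rho_max G rk = (THE \<rho>. rk < \<rho> \<and> (\<rho> - rk) * G \<rho> = 2 * rk)"

end

theory Submission
  imports Defs
begin

text \<open>
  Write \<open>A = \<Gamma>(\<rho>\<^sub>k) \<rho>\<^sub>k > 0\<close> and \<open>B = p\<^sub>k - h(\<rho>\<^sub>k) \<ge> 0\<close>.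
  Since \<open>\<Gamma>\<close> decreases to \<open>\<Gamma>\<^sub>\<infinity> > 0\<close>, the map \<open>\<rho> \<mapsto> (\<rho> - \<rho>\<^sub>k) \<Gamma>(\<rho>)\<close> has derivative
  \<open>(\<Gamma> + \<rho>\<Gamma>') - \<rho>\<^sub>k\<Gamma>' > 0\<close> and grows beyond \<open>2\<rho>\<^sub>k\<close>, so \<open>\<rho>\<^sub>max\<close> is well defined.
  The derivative of \<open>\<Phi>\<^sub>k(p,\<cdot>)\<close> is a negative combination of \<open>h'\<close>, \<open>(\<rho>\<Gamma>)'\<close> and that
  derivative, so \<open>\<Phi>\<^sub>k(p,\<cdot>)\<close> is strictly decreasing. It equals \<open>A (p - p\<^sub>k) > 0\<close> at \<open>\<rho>\<^sub>k\<close>,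
  and at \<open>\<rho>\<^sub>max\<close> the defining relation turns it into \<open>-A (p\<^sub>k + h) - \<rho>\<Gamma> B \<le> -2 A p\<^sub>k < 0\<close>;
  the intermediate value theorem finishes the proof.
\<close>

lemma strict_mono_on_atLeast_if_DERIV_pos:
  fixes f f' :: "real \<Rightarrow> real"
  assumes "\<And>x. a \<le> x \<Longrightarrow> (f has_real_derivative f' x) (at x)"
      and "\<And>x. a \<le> x \<Longrightarrow> 0 < f' x"
  shows "strict_mono_on {a..} f"
proof (rule strict_mono_onI)
  fix x y assume "x \<in> {a..}" "y \<in> {a..}" "x < y"
  then show "f x < f y"
    using assms by (intro DERIV_pos_imp_increasing[OF \<open>x < y\<close>]) (metis atLeast_iff order.trans)
qed

lemma strict_mono_on_ex1_level:
  fixes f :: "real \<Rightarrow> real"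
  assumes "continuous_on {a..b} f" and mono: "strict_mono_on {a..b} f"
      and "a \<le> b" "f a < c" "c < f b"
  shows "\<exists>!x. a < x \<and> x < b \<and> f x = c"
proof -
  obtain x where x: "a \<le> x" "x \<le> b" "f x = c"
    using IVT'[of f a c b] assms by (auto simp: less_imp_le)
  with assms have "a < x" "x < b" by (auto simp: order_le_less)
  moreover have "y = x" if "a < y \<and> y < b \<and> f y = c" for y
    using strict_mono_on_eqD[OF mono, of x y] that x by auto
  ultimately show ?thesis
    using x by blast
qed

lemma ge_tendsto_at_top_if_DERIV_nonpos:
  fixes f f' :: "real \<Rightarrow> real"
  assumes deriv: "\<And>x. a < x \<Longrightarrow> (f has_real_derivative f' x) (at x)"
      and nonpos: "\<And>x. a < x \<Longrightarrow> f' x \<le> 0"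
      and lim: "(f \<longlongrightarrow> L) at_top" and "a < x"
  shows "L \<le> f x"
proof (rule tendsto_upperbound[OF lim _ trivial_limit_at_top_linorder])
  have "f y \<le> f x" if "x \<le> y" for y
    using \<open>a < x\<close> that deriv nonpos
    by (intro DERIV_nonpos_imp_nonincreasing[OF that]) (metis order_less_le_trans)
  then show "\<forall>\<^sub>F y in at_top. f y \<le> f x"
    by (auto simp: eventually_at_top_linorder)
qed

lemma shifted_product_deriv_pos:
  fixes g g' x r :: real
  assumes "0 < g" "0 \<le> g + x * g'" "g' \<le> 0" "0 < r"
  shows "0 < g + (x - r) * g'"
proof (cases "g' = 0")
  case False
  with assms have "0 < - r * g'"
    by (simp add: mult_pos_neg)
  with assms show ?thesis
    by (simp add: algebra_simps)
qed (use assms in simp)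

lemma rho_max_eqI:
  assumes mono: "strict_mono_on {rk..} (\<lambda>x. (x - rk) * G x)"
      and "rk < m" "(m - rk) * G m = 2 * rk"
  shows "rho_max G rk = m"
  unfolding rho_max_def
proof (rule the_equality)
  fix y assume "rk < y \<and> (y - rk) * G y = 2 * rk"
  with assms show "y = m"
    using strict_mono_on_eqD[OF mono, of y m] by auto
qed (use assms in simp)

lemma rho_max_defining_relation:
  assumes mono: "strict_mono_on {rk..} (\<lambda>x. (x - rk) * G x)"
      and cont: "continuous_on {rk..} (\<lambda>x. (x - rk) * G x)"
      and G_ge: "\<And>x. rk < x \<Longrightarrow> L \<le> G x" and "0 < L" "0 < rk"
  shows "rk < rho_max G rk" "(rho_max G rk - rk) * G (rho_max G rk) = 2 * rk"
proof -
  define b where "b = rk + 2 * rk / L + 1"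
  have "rk < b"
    using assms by (simp add: b_def add_nonneg_pos)
  have "2 * rk < 2 * rk + L"
    using \<open>0 < L\<close> by simp
  also have "\<dots> = (b - rk) * L"
    using \<open>0 < L\<close> by (simp add: b_def field_simps)
  also have "\<dots> \<le> (b - rk) * G b"
    using G_ge[OF \<open>rk < b\<close>] \<open>rk < b\<close> by simp
  finally have "\<exists>!m. rk < m \<and> m < b \<and> (m - rk) * G m = 2 * rk"
    using \<open>rk < b\<close> \<open>0 < rk\<close>
    by (intro strict_mono_on_ex1_level continuous_on_subset[OF cont]
        monotone_on_subset[OF mono]) auto
  then obtain m where m: "rk < m" "(m - rk) * G m = 2 * rk"
    by blast
  then show "rk < rho_max G rk" "(rho_max G rk - rk) * G (rho_max G rk) = 2 * rk"
    using rho_max_eqI[OF mono m] by simp_all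
qed

lemma hugoniot_at_reference: "hugoniot G h rk pk p rk = G rk * rk * (p - pk)"
  by (simp add: hugoniot_def algebra_simps)

lemma has_real_derivative_hugoniot:
  assumes "(G has_real_derivative dG) (at x)" "(h has_real_derivative dh) (at x)"
  shows "(hugoniot G h rk pk p has_real_derivative
           - G rk * rk * dh - (pk - h rk) * (G x + x * dG)
           - 1/2 * G rk * (p + pk) * (G x + (x - rk) * dG)) (at x)"
  unfolding hugoniot_def[abs_def]
  by (auto intro!: derivative_eq_intros assms simp: field_simps)

lemma strict_mono_on_uminus_hugoniot:
  assumes G_deriv: "\<And>x. 0 < x \<Longrightarrow> (G has_real_derivative G' x) (at x)"
      and h_deriv: "\<And>x. 0 < x \<Longrightarrow> (h has_real_derivative h' x) (at x)"
      and G_pos: "\<And>x. 0 < x \<Longrightarrow> 0 < G x"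
      and "\<And>x. 0 < x \<Longrightarrow> G' x \<le> 0"
      and "\<And>x. 0 < x \<Longrightarrow> 0 \<le> G x + x * G' x"
      and h'_nonneg: "\<And>x. 0 < x \<Longrightarrow> 0 \<le> h' x"
      and "0 < rk" "0 \<le> pk - h rk" "0 < p + pk"
  shows "strict_mono_on {rk..} (\<lambda>\<rho>. - hugoniot G h rk pk p \<rho>)"
proof (rule strict_mono_on_atLeast_if_DERIV_pos)
  fix x assume "rk \<le> x"
  with \<open>0 < rk\<close> have x: "0 < x" by linarith
  show "((\<lambda>\<rho>. - hugoniot G h rk pk p \<rho>) has_real_derivative
          G rk * rk * h' x + (pk - h rk) * (G x + x * G' x)
          + 1/2 * G rk * (p + pk) * (G x + (x - rk) * G' x)) (at x)"
    using DERIV_minus[OF has_real_derivative_hugoniot[where rk = rk and pk = pk and p = p,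
          OF G_deriv[OF x] h_deriv[OF x]]]
    by (simp add: algebra_simps)
  have "0 < G x + (x - rk) * G' x"
    using assms x by (intro shifted_product_deriv_pos) auto
  then have "0 < 1/2 * G rk * (p + pk) * (G x + (x - rk) * G' x)"
    using assms G_pos[OF \<open>0 < rk\<close>] by simp
  moreover have "0 \<le> G rk * rk * h' x"
    using G_pos[OF \<open>0 < rk\<close>] h'_nonneg[OF x] \<open>0 < rk\<close> by simp
  moreover have "0 \<le> (pk - h rk) * (G x + x * G' x)"
    using assms x by simp
  ultimately show "0 < G rk * rk * h' x + (pk - h rk) * (G x + x * G' x)
               + 1/2 * G rk * (p + pk) * (G x + (x - rk) * G' x)"
    by linarith
qed

lemma hugoniot_neg_at_rho_max:
  assumes rel: "(m - rk) * G m = 2 * rk"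
      and "h rk \<le> h m" "rk * G rk \<le> m * G m"
      and "0 < G rk * rk" "0 \<le> pk - h rk" "0 < pk"
  shows "hugoniot G h rk pk p m < 0"
proof -
  define A where "A = G rk * rk"
  define B where "B = pk - h rk"
  have "hugoniot G h rk pk p m = A * (p - h m) - m * G m * B - 1/2 * G rk * (p + pk) * ((m - rk) * G m)"
    by (simp add: hugoniot_def A_def B_def algebra_simps)
  also have "\<dots> = A * (p - h m) - m * G m * B - A * (p + pk)"
    by (simp add: rel A_def)
  also have "\<dots> = - A * (pk + h m) - m * G m * B"
    by (simp add: algebra_simps)
  also have "\<dots> \<le> - A * (pk + h rk) - A * B"
  proof -
    have "A * B \<le> m * G m * B"
      using assms mult_right_mono[of A "m * G m" B] by (simp add: A_def B_def mult.commute)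
    moreover have "A * h rk \<le> A * h m"
      using assms by (auto simp: A_def intro!: mult_left_mono)
    ultimately show ?thesis
      by (simp add: ring_distribs)
  qed
  also have "\<dots> = - 2 * A * pk"
    by (simp add: B_def algebra_simps)
  also have "\<dots> < 0"
    using assms by (simp add: A_def)
  finally show ?thesis .
qed

theorem mainTheorem4:
  fixes G G' G'' h h' h'' :: "real \<Rightarrow> real"
    and Ginf rk pk p :: real
  assumes G1: "\<And>x. 0 < x \<Longrightarrow> (G has_real_derivative G' x) (at x)"
      and G2: "\<And>x. 0 < x \<Longrightarrow> (G' has_real_derivative G'' x) (at x)"
      and G2c: "continuous_on {0<..} G''"
      and h1: "\<And>x. 0 < x \<Longrightarrow> (h has_real_derivative h' x) (at x)"
      and h2: "\<And>x. 0 < x \<Longrightarrow> (h' has_real_derivative h'' x) (at x)"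
      and h2c: "continuous_on {0<..} h''"
      and C1a: "\<And>x. 0 < x \<Longrightarrow> G' x \<le> 0"
      and C1b: "\<And>x. 0 < x \<Longrightarrow> G x + x * G' x \<ge> 0"
      and C1c: "\<And>x. 0 < x \<Longrightarrow> 2 * G' x + x * G'' x \<ge> 0"
      and C2a: "(G \<longlongrightarrow> Ginf) at_top" and C2b: "Ginf > 0"
      and C2c: "\<And>x. 0 < x \<Longrightarrow> G x \<le> Ginf + 2"
      and C3a: "\<And>x. 0 < x \<Longrightarrow> h' x \<ge> 0"
      and C3b: "\<And>x. 0 < x \<Longrightarrow> h'' x \<ge> 0"
      and rk: "rk > 0" and pk: "pk > 0"
      and ek: "(pk - h rk) / (G rk * rk) \<ge> 0"
      and p: "p > pk"
  shows "\<exists>!\<rho>. rk < \<rho> \<and> \<rho> < rho_max G rk \<and> hugoniot G h rk pk p \<rho> = 0"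
proof -
  have G_ge: "Ginf \<le> G x" if "0 < x" for x
    using ge_tendsto_at_top_if_DERIV_nonpos[OF G1 C1a C2a that] .
  have G_pos: "0 < G x" if "0 < x" for x
    using G_ge[OF that] C2b by linarith
  have A_pos: "0 < G rk * rk"
    using G_pos[OF rk] rk by simp
  with ek have B_nonneg: "0 \<le> pk - h rk"
    by (auto simp: zero_le_divide_iff)
  have deriv_shifted: "((\<lambda>x. (x - rk) * G x) has_real_derivative G x + (x - rk) * G' x) (at x)"
    if "rk \<le> x" for x
    using that rk by (auto intro!: derivative_eq_intros G1 simp: algebra_simps)
  have "strict_mono_on {rk..} (\<lambda>x. (x - rk) * G x)"
    using rk G_pos C1a C1b
    by (intro strict_mono_on_atLeast_if_DERIV_pos[OF deriv_shifted] shifted_product_deriv_pos) auto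
  moreover have "continuous_on {rk..} (\<lambda>x. (x - rk) * G x)"
    using deriv_shifted by (intro has_real_derivative_imp_continuous_on) auto
  ultimately have m: "rk < rho_max G rk" "(rho_max G rk - rk) * G (rho_max G rk) = 2 * rk"
    using rho_max_defining_relation[where L = Ginf] G_ge rk C2b by auto
  have "h rk \<le> h (rho_max G rk)"
  proof (rule DERIV_nonneg_imp_nondecreasing[OF less_imp_le[OF m(1)]])
    fix x assume "rk \<le> x"
    with rk have "0 < x" by linarith
    then show "\<exists>y. (h has_real_derivative y) (at x) \<and> 0 \<le> y"
      using h1 C3a by blast
  qed
  moreover have "rk * G rk \<le> rho_max G rk * G (rho_max G rk)"
  proof (rule DERIV_nonneg_imp_nondecreasing[OF less_imp_le[OF m(1)]])
    fix x assume "rk \<le> x"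
    with rk have "0 < x" by linarith
    then show "\<exists>y. ((\<lambda>x. x * G x) has_real_derivative y) (at x) \<and> 0 \<le> y"
      using C1b G1 by (auto intro!: exI[of _ "G x + x * G' x"] derivative_eq_intros)
  qed
  ultimately have "- hugoniot G h rk pk p rk < 0" "0 < - hugoniot G h rk pk p (rho_max G rk)"
    using hugoniot_at_reference[of G h rk pk p] hugoniot_neg_at_rho_max[where G = G and rk = rk, OF m(2)]
      A_pos B_nonneg p pk by simp_all
  moreover have mono: "strict_mono_on {rk..} (\<lambda>\<rho>. - hugoniot G h rk pk p \<rho>)"
    using G1 h1 G_pos C1a C1b C3a rk B_nonneg p pk by (intro strict_mono_on_uminus_hugoniot) auto
  moreover have cont: "continuous_on {rk..} (\<lambda>\<rho>. - hugoniot G h rk pk p \<rho>)"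
    using rk by (intro continuous_on_minus continuous_at_imp_continuous_on ballI
        DERIV_isCont[OF has_real_derivative_hugoniot]) (auto intro: G1 h1)
  ultimately have "\<exists>!\<rho>. rk < \<rho> \<and> \<rho> < rho_max G rk \<and> - hugoniot G h rk pk p \<rho> = 0"
    using m(1) by (intro strict_mono_on_ex1_level continuous_on_subset[OF cont]
        monotone_on_subset[OF mono]) auto
  then show ?thesis
    by simp
qed

end
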